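(* Let $N=\{1,\dots,n\}$, $\eta>0$, integers $B\ge1$, $Q\ge1$. Let $(A(k))_{k\ge0}$ be $n\times n$ matrices, let $x(0)\in\mathbb{R}^n$ have all components multiples of $1/Q$, and define componentwise $x_i(k+1)=\lfloor\sum_{j=1}^na_{ij}(k)x_j(k)\rfloor$, where $\lfloor\cdot\rfloor$ is rounding down to the nearest multiple of $1/Q$. Assume: (i) each $A(k)$ is doubly stochastic with positive diagonal entries and all positive entries at least $\eta$; (ii) for every integer $k\ge0$, every permutation $\sigma$ of $N$ with $x_{\sigma(1)}(kB)\ge\cdots\ge x_{\sigma(n)}(kB)$, and every $d\in\{1,\dots,n-1\}$, either $x_{\sigma(d)}(kB)=x_{\sigma(d+1)}(kB)$, or there exist $t\in\{kB,\dots,(k+1)B-1\}$, $i\in\{\sigma(1),\dots,\sigma(d)\}$, $j\in\{\sigma(d+1),\dots,\sigma(n)\}$ with $(i,j)$ or $(j,i)$ in $\mathcal{E}(A(t))$. Then for every integer $k\ge0$ and every permutation $\sigma$ of $N$ with $x_{\sigma(1)}(kB)\ge\cdots\ge x_{\sigma(n)}(kB)$, \[\underline{V}(x(kB))-\underline{V}(x((k+1)B))\ge\frac\eta2\sum_{i=1}^{n-1}\big(x_{\sigma(i)}(kB)-x_{\sigma(i+1)}(kB)\big)^2.\]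
   Context: A matrix is doubly stochastic if it is nonnegative with all row and column sums equal to $1$. For a matrix $A=[a_{ij}]$, $\mathcal{E}(A)$ is the set of directed edges $(j,i)$ (including self-edges) with $a_{ij}>0$. For $x\in\mathbb{R}^n$, $m(x)=\min_ix_i$ and $\underline{V}(x)=\sum_{i=1}^n(x_i-m(x))^2$. *)

theory Defs
  imports "HOL-Combinatorics.Permutations" Complex_Main
begin

text \<open>Indices are 0-based: N = {0..<n}. Vectors are nat => real, matrices nat => nat => real,
  only entries with indices below n are relevant.\<close>

definition doubly_stochastic :: "nat \<Rightarrow> (nat \<Rightarrow> nat \<Rightarrow> real) \<Rightarrow> bool" where
  "doubly_stochastic n A \<longleftrightarrow>
     (\<forall>i<n. \<forall>j<n. A i j \<ge> 0) \<and>
     (\<forall>i<n. (\<Sum>j<n. A i j) = 1) \<and>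
     (\<forall>j<n. (\<Sum>i<n. A i j) = 1)"

definition edges :: "nat \<Rightarrow> (nat \<Rightarrow> nat \<Rightarrow> real) \<Rightarrow> (nat \<times> nat) set" where
  "edges n A = {(j, i). i < n \<and> j < n \<and> A i j > 0}"

definition minval :: "nat \<Rightarrow> (nat \<Rightarrow> real) \<Rightarrow> real" where
  "minval n x = Min ((\<lambda>i. x i) ` {..<n})"

definition Vlow :: "nat \<Rightarrow> (nat \<Rightarrow> real) \<Rightarrow> real" where
  "Vlow n x = (\<Sum>i<n. (x i - minval n x)^2)"

definition rdown :: "nat \<Rightarrow> real \<Rightarrow> real" where
  "rdown Q y = of_int \<lfloor>real Q * y\<rfloor> / real Q"

end

theory Submission
  imports Defs
begin

text \<open>Each rounded averaging step \<open>x \<mapsto> \<lfloor>A x\<rfloor>\<close> lowers Vlow by at least the energy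
  \<open>\<Sum>\<^sub>i \<Sum>\<^sub>j a\<^sub>i\<^sub>j (x\<^sub>j - (A x)\<^sub>i)\<^sup>2\<close>: double stochasticity turns
  \<open>\<Sum>\<^sub>i ((A x)\<^sub>i - m)\<^sup>2\<close> into \<open>\<Sum>\<^sub>i (x\<^sub>i - m)\<^sup>2\<close> minus the energy, and rounding
  down only moves values towards the minimum \<open>m\<close>, which is itself a grid point.

  Sort the values at the start of a window. A cut between consecutive positions with a nonzero gap
  is crossed (some row averages a value above the cut with one below it) at a first time in the
  window; before that the rows on either side only average among themselves, so the values above
  the cut stay above the gap and those below stay below it. All cuts first crossed at the same time
  in the same row telescope into the spread between two values averaged by that row, so by the
  entry bound \<open>\<eta>\<close> their squared gaps sum to at most \<open>2/\<eta>\<close> times the energy of the row.\<close>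

lemma rdown_le:
  assumes "Q \<ge> 1"
  shows "rdown Q y \<le> y"
proof -
  have "real Q > 0" using assms by simp
  moreover have "of_int \<lfloor>real Q * y\<rfloor> \<le> real Q * y" by simp
  ultimately show ?thesis unfolding rdown_def by (simp add: divide_le_eq mult.commute)
qed

lemma rdown_ge_grid_point:
  assumes "Q \<ge> 1" and "of_int m / real Q \<le> y"
  shows "of_int m / real Q \<le> rdown Q y"
proof -
  have Q: "real Q > 0" using assms(1) by simp
  hence "of_int m \<le> real Q * y" using assms(2) by (simp add: divide_le_eq mult.commute)
  hence "m \<le> \<lfloor>real Q * y\<rfloor>" by (simp add: le_floor_iff)
  thus ?thesis unfolding rdown_def using Q by (simp add: divide_right_mono)
qed

lemma rdown_on_grid: "\<exists>m::int. rdown Q y = of_int m / real Q"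
  unfolding rdown_def by blast

lemma convex_comb_ge:
  fixes a v :: "nat \<Rightarrow> real"
  assumes "\<forall>j<n. 0 \<le> a j" and "(\<Sum>j<n. a j) = 1" and "\<And>j. j < n \<Longrightarrow> 0 < a j \<Longrightarrow> u \<le> v j"
  shows "u \<le> (\<Sum>j<n. a j * v j)"
proof -
  have "u = (\<Sum>j<n. a j * u)" using assms(2) by (simp add: sum_distrib_right[symmetric])
  also have "\<dots> \<le> (\<Sum>j<n. a j * v j)"
    by (rule sum_mono) (use assms in \<open>force intro: mult_left_mono simp: le_less\<close>)
  finally show ?thesis .
qed

lemma convex_comb_le:
  fixes a v :: "nat \<Rightarrow> real"
  assumes "\<forall>j<n. 0 \<le> a j" and "(\<Sum>j<n. a j) = 1" and "\<And>j. j < n \<Longrightarrow> 0 < a j \<Longrightarrow> v j \<le> u"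
  shows "(\<Sum>j<n. a j * v j) \<le> u"
  using convex_comb_ge[of n a "-u" "\<lambda>j. - v j"] assms by (simp add: sum_negf)

definition row_energy :: "nat \<Rightarrow> (nat \<Rightarrow> nat \<Rightarrow> real) \<Rightarrow> (nat \<Rightarrow> real) \<Rightarrow> nat \<Rightarrow> real" where
  "row_energy n a v i = (\<Sum>j<n. a i j * (v j - (\<Sum>l<n. a i l * v l))^2)"

lemma weighted_variance_shift:
  fixes a v :: "nat \<Rightarrow> real"
  assumes "(\<Sum>j<n. a j) = 1"
  shows "(\<Sum>j<n. a j * (v j - (\<Sum>l<n. a l * v l))^2)
           = (\<Sum>j<n. a j * (v j - c)^2) - ((\<Sum>l<n. a l * v l) - c)^2"
proof -
  define y where "y = (\<Sum>l<n. a l * v l)"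
  have "(\<Sum>j<n. a j * (v j - y)^2)
      = (\<Sum>j<n. a j * (v j - c)^2 - 2 * (y - c) * (a j * v j) + (2 * (y - c) * c + (y - c)^2) * a j)"
    by (rule sum.cong) (auto simp: power2_eq_square algebra_simps)
  also have "\<dots> = (\<Sum>j<n. a j * (v j - c)^2) - 2 * (y - c) * y + 2 * (y - c) * c + (y - c)^2"
    using assms by (simp add: sum.distrib sum_subtractf sum_distrib_left[symmetric] y_def)
  also have "\<dots> = (\<Sum>j<n. a j * (v j - c)^2) - (y - c)^2"
    by (simp add: power2_eq_square algebra_simps)
  finally show ?thesis by (simp add: y_def)
qed

lemma doubly_stochastic_sum_sq:
  assumes "doubly_stochastic n a"
  shows "(\<Sum>i<n. ((\<Sum>l<n. a i l * v l) - c)^2)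
           = (\<Sum>i<n. (v i - c)^2) - (\<Sum>i<n. row_energy n a v i)"
proof -
  have rows: "\<And>i. i < n \<Longrightarrow> (\<Sum>j<n. a i j) = 1" and cols: "\<And>j. j < n \<Longrightarrow> (\<Sum>i<n. a i j) = 1"
    using assms unfolding doubly_stochastic_def by auto
  have "(\<Sum>i<n. row_energy n a v i)
      = (\<Sum>i<n. (\<Sum>j<n. a i j * (v j - c)^2) - ((\<Sum>l<n. a i l * v l) - c)^2)"
    unfolding row_energy_def by (rule sum.cong) (simp_all add: rows weighted_variance_shift)
  also have "\<dots> = (\<Sum>i<n. \<Sum>j<n. a i j * (v j - c)^2) - (\<Sum>i<n. ((\<Sum>l<n. a i l * v l) - c)^2)"
    by (simp add: sum_subtractf)
  also have "(\<Sum>i<n. \<Sum>j<n. a i j * (v j - c)^2) = (\<Sum>j<n. \<Sum>i<n. a i j * (v j - c)^2)"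
    by (rule sum.swap)
  also have "(\<Sum>j<n. \<Sum>i<n. a i j * (v j - c)^2) = (\<Sum>j<n. (v j - c)^2)"
    by (rule sum.cong) (simp_all add: cols sum_distrib_right[symmetric])
  finally show ?thesis by simp
qed

lemma row_energy_ge_pair:
  assumes "\<forall>j<n. 0 \<le> a i j" and "p < n" and "q < n" and "0 \<le> \<eta>"
    and "\<eta> \<le> a i p" and "\<eta> \<le> a i q"
  shows "\<eta> / 2 * (v p - v q)^2 \<le> row_energy n a v i"
proof -
  define y where "y = (\<Sum>l<n. a i l * v l)"
  have nonneg: "0 \<le> a i j * (v j - y)^2" if "j < n" for j
    using assms(1) that by simp
  show ?thesis
  proof (cases "p = q")
    case True
    thus ?thesis unfolding row_energy_def y_def[symmetric] using nonneg by (auto intro!: sum_nonneg)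
  next
    case False
    have "(v p - v q)^2 = 2 * ((v p - y)^2 + (v q - y)^2) - (v p + v q - 2 * y)^2"
      by algebra
    hence gap: "(v p - v q)^2 / 2 \<le> (v p - y)^2 + (v q - y)^2"
      using zero_le_power2[of "v p + v q - 2 * y"] by simp
    have "\<eta> / 2 * (v p - v q)^2 = \<eta> * ((v p - v q)^2 / 2)"
      by simp
    also have "\<dots> \<le> \<eta> * ((v p - y)^2 + (v q - y)^2)"
      using gap assms(4) by (rule mult_left_mono)
    also have "\<dots> = \<eta> * (v p - y)^2 + \<eta> * (v q - y)^2"
      by (simp add: distrib_left)
    also have "\<dots> \<le> a i p * (v p - y)^2 + a i q * (v q - y)^2"
      using assms(5,6) by (intro add_mono mult_right_mono) simp_all
    also have "\<dots> = (\<Sum>j\<in>{p, q}. a i j * (v j - y)^2)"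
      using False by simp
    also have "\<dots> \<le> (\<Sum>j<n. a i j * (v j - y)^2)"
      by (rule sum_mono2) (use assms(2,3) nonneg in auto)
    finally show ?thesis unfolding row_energy_def y_def .
  qed
qed

lemma sum_power2_le_power2_sum:
  fixes f :: "'a \<Rightarrow> real"
  assumes "finite F" and "\<And>i. i \<in> F \<Longrightarrow> 0 \<le> f i"
  shows "(\<Sum>i\<in>F. (f i)^2) \<le> (\<Sum>i\<in>F. f i)^2"
  using assms
proof (induction F rule: finite_induct)
  case (insert a F)
  have "0 \<le> f a * (\<Sum>i\<in>F. f i)"
    using insert.prems by (simp add: sum_nonneg)
  with insert show ?case by (simp add: power2_eq_square algebra_simps)
qed simp

lemma sum_gaps_power2_le:
  fixes h :: "nat \<Rightarrow> real"
  assumes "F \<subseteq> {i1..i2}" and "\<And>i. i \<in> {i1..i2} \<Longrightarrow> h (Suc i) \<le> h i"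
    and "h i1 \<le> u" and "v \<le> h (Suc i2)" and "i1 \<le> i2"
  shows "(\<Sum>i\<in>F. (h i - h (Suc i))^2) \<le> (u - v)^2"
proof -
  have fin: "finite F" using assms(1) finite_subset by blast
  have gaps: "0 \<le> h i - h (Suc i)" if "i \<in> {i1..i2}" for i using assms(2) that by simp
  have "(\<Sum>i\<in>F. (h i - h (Suc i))^2) \<le> (\<Sum>i\<in>F. h i - h (Suc i))^2"
    using fin gaps assms(1) by (intro sum_power2_le_power2_sum) auto
  also have "\<dots> \<le> (u - v)^2"
  proof (rule power_mono)
    show "0 \<le> (\<Sum>i\<in>F. h i - h (Suc i))"
      by (intro sum_nonneg) (use gaps assms(1) in auto)
    have "(\<Sum>i\<in>F. h i - h (Suc i)) \<le> (\<Sum>i\<in>{i1..i2}. h i - h (Suc i))"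
      using gaps assms(1) by (intro sum_mono2) auto
    also have "\<dots> = h i1 - h (Suc i2)"
      using sum_Suc_diff[of i1 i2 "\<lambda>i. - h i"] assms(5) by simp
    finally show "(\<Sum>i\<in>F. h i - h (Suc i)) \<le> u - v"
      using assms(3,4) by simp
  qed
  finally show ?thesis .
qed

lemma minval_le: "i < n \<Longrightarrow> minval n v \<le> v i"
  unfolding minval_def by simp

lemma minval_attained: "0 < n \<Longrightarrow> \<exists>i<n. minval n v = v i"
  unfolding minval_def using Min_in[of "v ` {..<n}"] by fastforce

lemma Vlow_le_sum_sq:
  assumes "\<And>i. i < n \<Longrightarrow> c \<le> v i"
  shows "Vlow n v \<le> (\<Sum>i<n. (v i - c)^2)"
proof (cases "n = 0")
  case False
  have "c \<le> minval n v"
    using minval_attained[of n v] False assms by auto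
  thus ?thesis
    unfolding Vlow_def by (intro sum_mono power_mono) (auto simp: minval_le)
qed (simp add: Vlow_def)

lemma Vlow_decrease_ge_energy:
  assumes "Q \<ge> 1" and grid: "\<And>i. i < n \<Longrightarrow> \<exists>m::int. v i = of_int m / real Q"
    and ds: "doubly_stochastic n a"
    and step: "\<And>i. i < n \<Longrightarrow> v' i = rdown Q (\<Sum>j<n. a i j * v j)"
  shows "(\<Sum>i<n. row_energy n a v i) \<le> Vlow n v - Vlow n v'"
proof (cases "n = 0")
  case False
  define c where "c = minval n v"
  obtain i0 where "i0 < n" "c = v i0"
    using minval_attained[of n v] False unfolding c_def by blast
  then obtain m :: int where c: "c = of_int m / real Q"
    using grid by metis
  have nonneg: "\<forall>j<n. 0 \<le> a i j" and rows: "(\<Sum>j<n. a i j) = 1" if "i < n" for i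
    using ds that unfolding doubly_stochastic_def by auto
  have avg_ge: "c \<le> (\<Sum>j<n. a i j * v j)" if "i < n" for i
    using convex_comb_ge[OF nonneg[OF that] rows[OF that]] by (simp add: c_def minval_le)
  have v'_ge: "c \<le> v' i" if "i < n" for i
    using rdown_ge_grid_point[OF assms(1), of m] avg_ge[OF that] step[OF that] c by simp
  have v'_le: "v' i \<le> (\<Sum>j<n. a i j * v j)" if "i < n" for i
    using rdown_le[OF assms(1)] step[OF that] by simp
  have "Vlow n v' \<le> (\<Sum>i<n. (v' i - c)^2)"
    using v'_ge by (rule Vlow_le_sum_sq)
  also have "\<dots> \<le> (\<Sum>i<n. ((\<Sum>j<n. a i j * v j) - c)^2)"
    using v'_ge v'_le by (intro sum_mono power_mono) auto
  also have "\<dots> = Vlow n v - (\<Sum>i<n. row_energy n a v i)"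
    unfolding doubly_stochastic_sum_sq[OF ds] Vlow_def c_def ..
  finally show ?thesis by simp
qed (simp add: Vlow_def)

definition closed_rows :: "nat \<Rightarrow> (nat \<Rightarrow> nat \<Rightarrow> real) \<Rightarrow> nat set \<Rightarrow> bool" where
  "closed_rows n a U \<longleftrightarrow> (\<forall>p\<in>U. \<forall>j<n. j \<notin> U \<longrightarrow> a p j = 0)"

definition crosses :: "nat \<Rightarrow> (nat \<Rightarrow> nat \<Rightarrow> real) \<Rightarrow> nat set \<Rightarrow> nat set \<Rightarrow> bool" where
  "crosses n a U W \<longleftrightarrow> (\<exists>r<n. \<exists>p\<in>U. \<exists>q\<in>W. 0 < a r p \<and> 0 < a r q)"

lemma crosses_sym: "crosses n a U W \<longleftrightarrow> crosses n a W U"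
  unfolding crosses_def by blast

lemma crosses_if_edge:
  assumes diag: "\<And>i. i < n \<Longrightarrow> 0 < a i i" and "p \<in> U" and "q \<in> W"
    and "(p, q) \<in> edges n a \<or> (q, p) \<in> edges n a"
  shows "crosses n a U W"
  using assms unfolding crosses_def edges_def by auto

lemma closed_rows_if_not_crosses:
  assumes nonneg: "\<And>i j. i < n \<Longrightarrow> j < n \<Longrightarrow> 0 \<le> a i j"
    and diag: "\<And>i. i < n \<Longrightarrow> 0 < a i i"
    and "U \<subseteq> {..<n}" and "\<not> crosses n a U ({..<n} - U)"
  shows "closed_rows n a U"
  unfolding closed_rows_def
proof (intro ballI allI impI)
  fix p j assume "p \<in> U" "j < n" "j \<notin> U"
  moreover have "p < n" using \<open>p \<in> U\<close> assms(3) by auto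
  ultimately show "a p j = 0"
    using assms(4) nonneg diag unfolding crosses_def by (metis Diff_iff le_less lessThan_iff)
qed

locale quantized_averaging =
  fixes n Q :: nat and A :: "nat \<Rightarrow> nat \<Rightarrow> nat \<Rightarrow> real" and x :: "nat \<Rightarrow> nat \<Rightarrow> real"
  assumes Q_pos: "Q \<ge> 1"
    and stochastic: "\<And>t. doubly_stochastic n (A t)"
    and x0_on_grid: "\<And>i. i < n \<Longrightarrow> \<exists>m::int. x 0 i = of_int m / real Q"
    and x_Suc: "\<And>t i. i < n \<Longrightarrow> x (Suc t) i = rdown Q (\<Sum>j<n. A t i j * x t j)"
begin

lemma x_on_grid: "i < n \<Longrightarrow> \<exists>m::int. x t i = of_int m / real Q"
  by (induction t) (simp_all add: x0_on_grid x_Suc rdown_on_grid)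

lemma A_nonneg: "i < n \<Longrightarrow> j < n \<Longrightarrow> 0 \<le> A t i j"
  using stochastic unfolding doubly_stochastic_def by blast

lemma A_row_sum: "i < n \<Longrightarrow> (\<Sum>j<n. A t i j) = 1"
  using stochastic unfolding doubly_stochastic_def by blast

lemma energy_le_Vlow_decrease:
  "(\<Sum>r<n. row_energy n (A t) (x t) r) \<le> Vlow n (x t) - Vlow n (x (Suc t))"
  using Q_pos x_on_grid stochastic x_Suc by (rule Vlow_decrease_ge_energy)

lemma lower_bound_preserved:
  assumes "U \<subseteq> {..<n}" and "\<And>s. s0 \<le> s \<Longrightarrow> s < t \<Longrightarrow> closed_rows n (A s) U"
    and "\<forall>p\<in>U. of_int m / real Q \<le> x s0 p" and "s0 \<le> t"
  shows "\<forall>p\<in>U. of_int m / real Q \<le> x t p"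
  using assms(4,3)
proof (induction t rule: dec_induct)
  case (step s)
  show ?case
  proof
    fix p assume "p \<in> U"
    with assms(1) have p: "p < n" by auto
    have "of_int m / real Q \<le> (\<Sum>j<n. A s p j * x s j)"
    proof (rule convex_comb_ge)
      fix j assume "j < n" "0 < A s p j"
      with assms(2)[OF step(1,2)] \<open>p \<in> U\<close> step.IH[OF step.prems]
      show "of_int m / real Q \<le> x s j" unfolding closed_rows_def by force
    qed (use A_nonneg A_row_sum p in auto)
    thus "of_int m / real Q \<le> x (Suc s) p"
      unfolding x_Suc[OF p] by (rule rdown_ge_grid_point[OF Q_pos])
  qed
qed

lemma upper_bound_preserved:
  assumes "U \<subseteq> {..<n}" and "\<And>s. s0 \<le> s \<Longrightarrow> s < t \<Longrightarrow> closed_rows n (A s) U"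
    and "\<forall>p\<in>U. x s0 p \<le> u" and "s0 \<le> t"
  shows "\<forall>p\<in>U. x t p \<le> u"
  using assms(4,3)
proof (induction t rule: dec_induct)
  case (step s)
  show ?case
  proof
    fix p assume "p \<in> U"
    with assms(1) have p: "p < n" by auto
    have "(\<Sum>j<n. A s p j * x s j) \<le> u"
    proof (rule convex_comb_le)
      fix j assume "j < n" "0 < A s p j"
      with assms(2)[OF step(1,2)] \<open>p \<in> U\<close> step.IH[OF step.prems]
      show "x s j \<le> u" unfolding closed_rows_def by force
    qed (use A_nonneg A_row_sum p in auto)
    thus "x (Suc s) p \<le> u"
      unfolding x_Suc[OF p] using rdown_le[OF Q_pos] order_trans by blast
  qed
qed

end

locale sorted_window = quantized_averaging +
  fixes \<eta> :: real and s0 s1 :: nat and \<sigma> :: "nat \<Rightarrow> nat"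
  assumes eta_pos: "0 < \<eta>"
    and diag_pos: "\<And>t i. i < n \<Longrightarrow> 0 < A t i i"
    and entries_ge: "\<And>t i j. i < n \<Longrightarrow> j < n \<Longrightarrow> 0 < A t i j \<Longrightarrow> \<eta> \<le> A t i j"
    and window: "s0 \<le> s1"
    and perm: "\<sigma> permutes {..<n}"
    and sorted: "\<And>p q. p \<le> q \<Longrightarrow> q < n \<Longrightarrow> x s0 (\<sigma> q) \<le> x s0 (\<sigma> p)"
    and cuts_crossed: "\<And>i. i < n - 1 \<Longrightarrow> x s0 (\<sigma> i) \<noteq> x s0 (\<sigma> (Suc i)) \<Longrightarrow>
           \<exists>t\<in>{s0..<s1}. crosses n (A t) (\<sigma> ` {..<Suc i}) (\<sigma> ` {Suc i..<n})"
begin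

definition gap :: "nat \<Rightarrow> real" where
  "gap i = x s0 (\<sigma> i) - x s0 (\<sigma> (Suc i))"

definition upper :: "nat \<Rightarrow> nat set" where
  "upper i = \<sigma> ` {..<Suc i}"

definition lower :: "nat \<Rightarrow> nat set" where
  "lower i = \<sigma> ` {Suc i..<n}"

definition cuts :: "nat set" where
  "cuts = {i. i < n - 1 \<and> gap i \<noteq> 0}"

definition first_crossing :: "nat \<Rightarrow> nat" where
  "first_crossing i = (LEAST t. s0 \<le> t \<and> t < s1 \<and> crosses n (A t) (upper i) (lower i))"

definition crossing_row :: "nat \<Rightarrow> nat" where
  "crossing_row i = (SOME r. r < n \<and> (\<exists>p\<in>upper i. \<exists>q\<in>lower i.
      0 < A (first_crossing i) r p \<and> 0 < A (first_crossing i) r q))"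

lemma upper_subset: "i < n \<Longrightarrow> upper i \<subseteq> {..<n}"
  unfolding upper_def using image_mono[of "{..<Suc i}" "{..<n}" \<sigma>] permutes_image[OF perm]
  by simp

lemma lower_eq_complement: "lower i = {..<n} - upper i"
proof -
  have "lower i = \<sigma> ` ({..<n} - {..<Suc i})"
    unfolding lower_def by (metis atLeastLessThan_def Diff_eq Compl_lessThan Int_commute)
  also have "\<dots> = \<sigma> ` {..<n} - upper i"
    unfolding upper_def by (rule image_set_diff[OF permutes_inj[OF perm]])
  finally show ?thesis
    by (simp only: permutes_image[OF perm])
qed

lemma upper_eq_complement: "i < n \<Longrightarrow> upper i = {..<n} - lower i"
  using upper_subset lower_eq_complement by auto

lemma first_crossing_spec:
  assumes "i \<in> cuts"
  shows "s0 \<le> first_crossing i" and "first_crossing i < s1"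
    and "crosses n (A (first_crossing i)) (upper i) (lower i)"
proof -
  have "\<exists>t. s0 \<le> t \<and> t < s1 \<and> crosses n (A t) (upper i) (lower i)"
    using cuts_crossed assms unfolding cuts_def gap_def upper_def lower_def by fastforce
  from LeastI_ex[OF this] show "s0 \<le> first_crossing i" "first_crossing i < s1"
    and "crosses n (A (first_crossing i)) (upper i) (lower i)"
    unfolding first_crossing_def by auto
qed

lemma no_crossing_before:
  assumes "i \<in> cuts" and "s0 \<le> s" and "s < first_crossing i"
  shows "\<not> crosses n (A s) (upper i) (lower i)"
  using not_less_Least[of s] first_crossing_spec(2)[OF assms(1)] assms(2,3)
  unfolding first_crossing_def by force

lemma crossing_row_spec:
  assumes "i \<in> cuts"
  shows "crossing_row i < n"
    and "\<exists>p\<in>upper i. \<exists>q\<in>lower i. 0 < A (first_crossing i) (crossing_row i) p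
                                 \<and> 0 < A (first_crossing i) (crossing_row i) q"
  using someI_ex[OF first_crossing_spec(3)[OF assms, unfolded crosses_def]]
  unfolding crossing_row_def by blast+

lemma bounds_at_first_crossing:
  assumes "i \<in> cuts"
  shows "\<forall>p\<in>upper i. x s0 (\<sigma> i) \<le> x (first_crossing i) p"
    and "\<forall>q\<in>lower i. x (first_crossing i) q \<le> x s0 (\<sigma> (Suc i))"
proof -
  have i: "i < n" using assms unfolding cuts_def by auto
  note no_cross = no_crossing_before[OF assms]
  have "closed_rows n (A s) (upper i)" if "s0 \<le> s" "s < first_crossing i" for s
    using A_nonneg diag_pos upper_subset[OF i] no_cross[OF that, unfolded lower_eq_complement]
    by (rule closed_rows_if_not_crosses)
  moreover obtain m :: int where "x s0 (\<sigma> i) = of_int m / real Q"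
    using x_on_grid permutes_in_image[OF perm] i by blast
  moreover have "\<forall>p\<in>upper i. x s0 (\<sigma> i) \<le> x s0 p"
    unfolding upper_def using sorted i by auto
  ultimately show "\<forall>p\<in>upper i. x s0 (\<sigma> i) \<le> x (first_crossing i) p"
    using lower_bound_preserved[OF upper_subset[OF i] _ _ first_crossing_spec(1)[OF assms]] by simp
  have lower_sub: "lower i \<subseteq> {..<n}"
    by (simp add: lower_eq_complement)
  have "closed_rows n (A s) (lower i)" if "s0 \<le> s" "s < first_crossing i" for s
  proof -
    have "\<not> crosses n (A s) (lower i) (upper i)"
      using no_cross[OF that] crosses_sym by blast
    with A_nonneg diag_pos lower_sub show ?thesis
      unfolding upper_eq_complement[OF i] by (rule closed_rows_if_not_crosses)
  qed
  moreover have "\<forall>q\<in>lower i. x s0 q \<le> x s0 (\<sigma> (Suc i))"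
    unfolding lower_def using sorted by auto
  ultimately show "\<forall>q\<in>lower i. x (first_crossing i) q \<le> x s0 (\<sigma> (Suc i))"
    using upper_bound_preserved[OF lower_sub _ _ first_crossing_spec(1)[OF assms]] by simp
qed

lemma fiber_energy_bound:
  assumes "r < n"
  shows "\<eta> / 2 * (\<Sum>i\<in>{i\<in>cuts. (first_crossing i, crossing_row i) = (t, r)}. (gap i)^2)
           \<le> row_energy n (A t) (x t) r"
proof (cases "{i\<in>cuts. (first_crossing i, crossing_row i) = (t, r)} = {}")
  case True
  have "0 \<le> row_energy n (A t) (x t) r"
    unfolding row_energy_def using A_nonneg assms by (auto intro!: sum_nonneg)
  with True show ?thesis by (simp only: sum.empty mult_zero_right)
next
  case False
  define F where "F = {i\<in>cuts. (first_crossing i, crossing_row i) = (t, r)}"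
  have fin: "finite F" unfolding F_def cuts_def by auto
  define i1 where "i1 = Min F"
  define i2 where "i2 = Max F"
  have "F \<noteq> {}" using False unfolding F_def .
  hence "i1 \<in> F" "i2 \<in> F"
    unfolding i1_def i2_def using fin by simp_all
  moreover have F_sub: "F \<subseteq> {i1..i2}"
    unfolding i1_def i2_def using fin by auto
  ultimately have i1: "i1 \<in> cuts" "first_crossing i1 = t" "crossing_row i1 = r"
    and i2: "i2 \<in> cuts" "first_crossing i2 = t" "crossing_row i2 = r" "i2 < n - 1"
    unfolding F_def cuts_def by auto
  obtain p where p: "p \<in> upper i1" "0 < A t r p"
    using crossing_row_spec(2)[OF i1(1)] i1(2,3) by blast
  obtain q where q: "q \<in> lower i2" "0 < A t r q"
    using crossing_row_spec(2)[OF i2(1)] i2(2,3) by blast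
  have "i1 < n" using F_sub \<open>i1 \<in> F\<close> i2(4) by auto
  hence "p < n" using p(1) upper_subset by blast
  have "q < n" using q(1) by (simp add: lower_eq_complement)
  have "(\<Sum>i\<in>F. (gap i)^2) \<le> (x t p - x t q)^2"
    unfolding gap_def
  proof (rule sum_gaps_power2_le[where h = "\<lambda>i. x s0 (\<sigma> i)"])
    show "x s0 (\<sigma> i1) \<le> x t p"
      using bounds_at_first_crossing(1)[OF i1(1)] p(1) i1(2) by auto
    show "x t q \<le> x s0 (\<sigma> (Suc i2))"
      using bounds_at_first_crossing(2)[OF i2(1)] q(1) i2(2) by auto
    show "x s0 (\<sigma> (Suc i)) \<le> x s0 (\<sigma> i)" if "i \<in> {i1..i2}" for i
      using that i2(4) by (intro sorted) auto
  qed (use F_sub \<open>i1 \<in> F\<close> in auto)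
  hence "\<eta> / 2 * (\<Sum>i\<in>F. (gap i)^2) \<le> \<eta> / 2 * (x t p - x t q)^2"
    using eta_pos by simp
  also have "\<dots> \<le> row_energy n (A t) (x t) r"
    using A_nonneg assms \<open>p < n\<close> \<open>q < n\<close> eta_pos entries_ge p(2) q(2)
    by (intro row_energy_ge_pair) auto
  finally show ?thesis unfolding F_def .
qed

lemma Vlow_window_decrease:
  "\<eta> / 2 * (\<Sum>i<n - 1. (gap i)^2) \<le> Vlow n (x s0) - Vlow n (x s1)"
proof -
  let ?fiber = "\<lambda>z. {i\<in>cuts. (first_crossing i, crossing_row i) = z}"
  have "(\<Sum>i<n - 1. (gap i)^2) = (\<Sum>i\<in>cuts. (gap i)^2)"
    by (rule sum.mono_neutral_right) (auto simp: cuts_def)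
  also have "\<dots> = (\<Sum>z\<in>{s0..<s1} \<times> {..<n}. \<Sum>i\<in>?fiber z. (gap i)^2)"
    by (rule sum.group[symmetric]) (auto simp: cuts_def first_crossing_spec crossing_row_spec)
  finally have "\<eta> / 2 * (\<Sum>i<n - 1. (gap i)^2)
      = (\<Sum>z\<in>{s0..<s1} \<times> {..<n}. \<eta> / 2 * (\<Sum>i\<in>?fiber z. (gap i)^2))"
    by (simp only: sum_distrib_left)
  also have "\<dots> \<le> (\<Sum>(t, r)\<in>{s0..<s1} \<times> {..<n}. row_energy n (A t) (x t) r)"
  proof (rule sum_mono)
    fix z assume "z \<in> {s0..<s1} \<times> {..<n}"
    then obtain t r where "z = (t, r)" "r < n" by auto
    thus "\<eta> / 2 * (\<Sum>i\<in>?fiber z. (gap i)^2) \<le> (case z of (t, r) \<Rightarrow> row_energy n (A t) (x t) r)"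
      using fiber_energy_bound by simp
  qed
  also have "\<dots> = (\<Sum>t\<in>{s0..<s1}. \<Sum>r<n. row_energy n (A t) (x t) r)"
    by (simp add: sum.cartesian_product)
  also have "\<dots> \<le> (\<Sum>t\<in>{s0..<s1}. Vlow n (x t) - Vlow n (x (Suc t)))"
    by (intro sum_mono energy_le_Vlow_decrease)
  also have "\<dots> = Vlow n (x s0) - Vlow n (x s1)"
    using sum_Suc_diff'[OF window, of "\<lambda>t. - Vlow n (x t)"] by simp
  finally show ?thesis .
qed

end

theorem lemma7:
  fixes n B Q :: nat and \<eta> :: real
    and A :: "nat \<Rightarrow> nat \<Rightarrow> nat \<Rightarrow> real" and x :: "nat \<Rightarrow> nat \<Rightarrow> real"
  assumes eta_pos: "\<eta> > 0" and B: "B \<ge> 1" and Q: "Q \<ge> 1"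
    and x0: "\<forall>i<n. \<exists>m::int. x 0 i = of_int m / real Q"
    and xrec: "\<forall>k. \<forall>i<n. x (Suc k) i = rdown Q (\<Sum>j<n. A k i j * x k j)"
    and ds: "\<forall>k. doubly_stochastic n (A k)"
    and diag: "\<forall>k. \<forall>i<n. A k i i > 0"
    and lowb: "\<forall>k. \<forall>i<n. \<forall>j<n. A k i j > 0 \<longrightarrow> A k i j \<ge> \<eta>"
    and conn: "\<forall>k \<sigma>. \<sigma> permutes {..<n} \<longrightarrow>
                 (\<forall>p q. p \<le> q \<longrightarrow> q < n \<longrightarrow> x (k*B) (\<sigma> q) \<le> x (k*B) (\<sigma> p)) \<longrightarrow>
                 (\<forall>d. 1 \<le> d \<longrightarrow> d \<le> n - 1 \<longrightarrow>
                    x (k*B) (\<sigma> (d - 1)) = x (k*B) (\<sigma> d) \<or>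
                    (\<exists>t i j. k*B \<le> t \<and> t \<le> (k+1)*B - 1 \<and>
                       i \<in> \<sigma> ` {..<d} \<and> j \<in> \<sigma> ` {d..<n} \<and>
                       ((i, j) \<in> edges n (A t) \<or> (j, i) \<in> edges n (A t))))"
    and perm: "\<sigma> permutes {..<n}"
    and sorted: "\<forall>p q. p \<le> q \<longrightarrow> q < n \<longrightarrow> x (k*B) (\<sigma> q) \<le> x (k*B) (\<sigma> p)"
  shows "Vlow n (x (k*B)) - Vlow n (x ((k+1)*B))
           \<ge> \<eta> / 2 * (\<Sum>i<n-1. (x (k*B) (\<sigma> i) - x (k*B) (\<sigma> (i+1)))^2)"
proof -
  have cuts_crossed: "\<exists>t\<in>{k*B..<(k+1)*B}. crosses n (A t) (\<sigma> ` {..<Suc i}) (\<sigma> ` {Suc i..<n})"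
    if "i < n - 1" and "x (k*B) (\<sigma> i) \<noteq> x (k*B) (\<sigma> (Suc i))" for i
  proof -
    have "1 \<le> Suc i" and "Suc i \<le> n - 1" using that(1) by simp_all
    from conn[rule_format, OF perm sorted[rule_format] this] that(2)
    obtain t p q where t: "k*B \<le> t" "t \<le> (k+1)*B - 1"
      and pq: "p \<in> \<sigma> ` {..<Suc i}" "q \<in> \<sigma> ` {Suc i..<n}"
        "(p, q) \<in> edges n (A t) \<or> (q, p) \<in> edges n (A t)"
      by auto
    have "t < (k+1)*B" using t(2) B by (simp add: le_diff_conv2)
    moreover have "crosses n (A t) (\<sigma> ` {..<Suc i}) (\<sigma> ` {Suc i..<n})"
      using diag pq by (intro crosses_if_edge) auto
    ultimately show ?thesis using t(1) by auto
  qed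
  interpret sorted_window n Q A x \<eta> "k*B" "(k+1)*B" \<sigma>
    using Q ds x0 xrec eta_pos diag lowb perm sorted cuts_crossed by unfold_locales auto
  have "\<eta> / 2 * (\<Sum>i<n - 1. (gap i)^2) \<le> Vlow n (x (k*B)) - Vlow n (x ((k+1)*B))"
    by (rule Vlow_window_decrease)
  thus ?thesis by (simp add: gap_def)
qed

end
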